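(* Let $p$ be a prime and $a,b,c$ positive integers such that $c$ is a primitive divisor of $p^a-1$, and put $u=\tfrac{p^a-1}{c}$. Then the following are equivalent: (i) $bc$ is a primitive divisor of $p^{ab}-1$; (ii) $bc\mid p^{ab}-1$ and $bc\nmid p^{a\ell}-1$ for all $1\le \ell\le b-1$; (iii) $b\mid u\,\Psi_b(p^a)$ and $b\nmid u\,\Psi_\ell(p^a)$ for all $1\le\ell\le b-1$.
   Context: An integer $e$ is a primitive divisor of $p^a-1$ if $e\mid p^a-1$ and $e\nmid p^t-1$ for every $1\le t<a$. For a positive integer $t$, $\Psi_t(x)=x^{t-1}+\cdots+x+1$. *)

theory Defs
  imports "HOL-Computational_Algebra.Primes"
begin

definition primitive_divisor :: "nat \<Rightarrow> nat \<Rightarrow> nat \<Rightarrow> bool" where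
  "primitive_divisor e p a \<longleftrightarrow> e dvd p ^ a - 1 \<and> (\<forall>t. 1 \<le> t \<and> t < a \<longrightarrow> \<not> e dvd p ^ t - 1)"

definition Psi :: "nat \<Rightarrow> nat \<Rightarrow> nat" where
  "Psi t x = (\<Sum>i<t. x ^ i)"

end

theory Submission
  imports Defs "HOL-Number_Theory.Number_Theory"
begin

text \<open>
  Since c is a primitive divisor of p^a - 1, the order of p modulo c is exactly a, so
  every exponent t with c | p^t - 1 is a multiple of a. Hence in the definition of
  bc being a primitive divisor of p^(ab) - 1 only the exponents t = a l matter, which
  gives (i) \<longleftrightarrow> (ii). Writing p^(al) - 1 = (p^a - 1) \<Psi>_l(p^a) = c u \<Psi>_l(p^a) and
  cancelling c gives (ii) \<longleftrightarrow> (iii).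
\<close>

lemma Psi_geometric: "(q - 1) * Psi l q = q ^ l - 1" for q l :: nat
proof (cases "q = 0")
  case True
  then show ?thesis by (cases l) auto
next
  case False
  show ?thesis
  proof (induction l)
    case 0
    then show ?case by (simp add: Psi_def)
  next
    case (Suc l)
    have "(q - 1) * Psi (Suc l) q = (q ^ l - 1) + (q - 1) * q ^ l"
      using Suc by (simp add: Psi_def algebra_simps)
    also have "\<dots> = q ^ Suc l - 1"
      using False by (simp add: algebra_simps diff_mult_distrib Suc_le_eq)
    finally show ?case .
  qed
qed

lemma primitive_divisor_dvd_exponent:
  fixes c p a t :: nat
  assumes "primitive_divisor c p a" and "a > 0" and "c dvd p ^ t - 1"
  shows "a dvd t"
proof (cases "p = 0")
  case True
  then have "a = 1"
    using assms(1,2) by (auto simp: primitive_divisor_def not_less_iff_gr_or_eq)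
  then show ?thesis by simp
next
  case False
  have dvd_iff_cong: "c dvd p ^ s - 1 \<longleftrightarrow> [p ^ s = 1] (mod c)" for s
    using False by (simp add: cong_altdef_nat)
  have "[p ^ a = 1] (mod c)"
    using assms(1) dvd_iff_cong by (simp add: primitive_divisor_def)
  then have "coprime (p ^ a) c"
    by (meson cong_imp_coprime cong_sym coprime_1_left)
  then have "coprime c p"
    using assms(2) by (simp add: ac_simps)
  then have "ord c p > 0"
    using ord_eq_0 by blast
  have "c dvd p ^ ord c p - 1"
    using ord_works[of p c] dvd_iff_cong by blast
  then have "\<not> ord c p < a"
    using assms(1) \<open>ord c p > 0\<close>
    unfolding primitive_divisor_def by (metis Suc_leI One_nat_def)
  moreover have "ord c p \<le> a"
    using \<open>[p ^ a = 1] (mod c)\<close> assms(2) ord_divides dvd_imp_le by blast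
  ultimately have "ord c p = a"
    by linarith
  then show ?thesis
    using assms(3) dvd_iff_cong ord_divides by metis
qed

lemma primitive_divisor_multiple_iff:
  fixes c d p a b :: nat
  assumes "primitive_divisor c p a" and "a > 0" and "c dvd d"
  shows "primitive_divisor d p (a * b)
         \<longleftrightarrow> d dvd p ^ (a * b) - 1 \<and> (\<forall>l. 1 \<le> l \<and> l \<le> b - 1 \<longrightarrow> \<not> d dvd p ^ (a * l) - 1)"
proof -
  have "(\<forall>t. 1 \<le> t \<and> t < a * b \<longrightarrow> \<not> d dvd p ^ t - 1)
        \<longleftrightarrow> (\<forall>l. 1 \<le> l \<and> l \<le> b - 1 \<longrightarrow> \<not> d dvd p ^ (a * l) - 1)"
  proof safe
    fix l
    assume no_divisor: "\<forall>t. 1 \<le> t \<and> t < a * b \<longrightarrow> \<not> d dvd p ^ t - 1"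
      and l: "1 \<le> l" "l \<le> b - 1" and d: "d dvd p ^ (a * l) - 1"
    have "1 \<le> a * l" "a * l < a * b"
      using l \<open>a > 0\<close> by auto
    then show False
      using no_divisor d by blast
  next
    fix t
    assume no_multiple: "\<forall>l. 1 \<le> l \<and> l \<le> b - 1 \<longrightarrow> \<not> d dvd p ^ (a * l) - 1"
      and t: "1 \<le> t" "t < a * b" and d: "d dvd p ^ t - 1"
    then obtain l where "t = a * l"
      using primitive_divisor_dvd_exponent[OF assms(1,2)] assms(3) dvd_trans by blast
    then show False
      using no_multiple t d by (auto intro: Nat.gr0I)
  qed
  then show ?thesis
    by (simp add: primitive_divisor_def)
qed

lemma mult_dvd_power_minus_one_iff:
  fixes b c u q l :: nat
  assumes "c > 0" and "c * u = q - 1"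
  shows "b * c dvd q ^ l - 1 \<longleftrightarrow> b dvd u * Psi l q"
proof -
  have "q ^ l - 1 = c * (u * Psi l q)"
    using Psi_geometric[of q l] assms(2) by (metis mult.assoc)
  then show ?thesis
    using assms(1) by (simp add: mult.commute[of b c])
qed

theorem mainTheorem4:
  fixes p a b c :: nat
  assumes "prime p" and "a > 0" and "b > 0" and "c > 0"
    and "primitive_divisor c p a"
  defines "u \<equiv> (p ^ a - 1) div c"
  shows "(primitive_divisor (b * c) p (a * b)
           \<longleftrightarrow> (b * c dvd p ^ (a * b) - 1 \<and>
                (\<forall>l. 1 \<le> l \<and> l \<le> b - 1 \<longrightarrow> \<not> b * c dvd p ^ (a * l) - 1)))
       \<and> ((b * c dvd p ^ (a * b) - 1 \<and>
                (\<forall>l. 1 \<le> l \<and> l \<le> b - 1 \<longrightarrow> \<not> b * c dvd p ^ (a * l) - 1))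
           \<longleftrightarrow> (b dvd u * Psi b (p ^ a) \<and>
                (\<forall>l. 1 \<le> l \<and> l \<le> b - 1 \<longrightarrow> \<not> b dvd u * Psi l (p ^ a))))"
proof -
  have "c * u = p ^ a - 1"
    using assms(5) unfolding u_def primitive_divisor_def by simp
  then have "b * c dvd p ^ (a * l) - 1 \<longleftrightarrow> b dvd u * Psi l (p ^ a)" for l
    using mult_dvd_power_minus_one_iff[OF assms(4)] by (simp add: power_mult)
  then show ?thesis
    using primitive_divisor_multiple_iff[OF assms(5,2), of "b * c" b] by simp
qed

end
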